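(* Let $A\subset\mathbb{R}^2$ be a set which is not totally disconnected, i.e. $A$ has a connected component which is not a singleton. Then $A+S^1$ has non-empty interior.
   Context: $S^1$ is the Euclidean unit circle in $\mathbb{R}^2$; $X+Y=\{x+y:x\in X,y\in Y\}$. *)

theory Defs
  imports "HOL-Analysis.Analysis"
begin

end

theory Submission
  imports Defs
begin

text \<open>Let \<open>C \<subseteq> A\<close> be a connected set containing two points \<open>p \<noteq> q\<close>. For a point \<open>w\<close> at
  distance less than \<open>r\<close> from \<open>p\<close> and more than \<open>r\<close> from \<open>q\<close>, the continuous function
  \<open>dist w\<close> takes the value \<open>r\<close> somewhere on \<open>C\<close>, so \<open>w\<close> lies on a sphere of radius \<open>r\<close>
  centred in \<open>A\<close>. The set of such \<open>w\<close> is \<open>ball p r - cball q r\<close>, which is open and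
  non-empty.\<close>

lemma connected_dist_intermediate_value:
  fixes C :: "'a::metric_space set"
  assumes "connected C" "p \<in> C" "q \<in> C" "dist w p \<le> r" "r \<le> dist w q"
  obtains c where "c \<in> C" "dist w c = r"
proof -
  have "connected (dist w ` C)"
    using assms(1) by (intro connected_continuous_image) (auto intro: continuous_intros)
  moreover have "dist w p \<in> dist w ` C" "dist w q \<in> dist w ` C"
    using assms(2,3) by auto
  ultimately have "r \<in> dist w ` C"
    using assms(4,5) unfolding connected_iff_interval by blast
  then show thesis using that by blast
qed

lemma ball_diff_cball_nonempty:
  fixes p q :: "'a::real_normed_vector"
  assumes "p \<noteq> q" "r > 0"
  shows "ball p r - cball q r \<noteq> {}"
proof -
  define d where "d = dist p q"
  define s where "s = r - min d r / 2"
  have "d > 0" using assms(1) unfolding d_def by simp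
  then have s: "0 < s" "s < r" "r < d + s"
    using assms(2) unfolding s_def by (auto simp: min_def)
  define z where "z = p + (s / d) *\<^sub>R (p - q)"
  have "dist p z = s"
    using \<open>d > 0\<close> s unfolding z_def d_def by (simp add: dist_norm)
  moreover have "dist z q = d + s"
  proof -
    have "z - q = (1 + s / d) *\<^sub>R (p - q)"
      unfolding z_def by (simp add: algebra_simps)
    then have "dist z q = (1 + s / d) * d"
      using \<open>d > 0\<close> s unfolding d_def by (simp add: dist_norm)
    also have "\<dots> = d + s"
      using \<open>d > 0\<close> by (simp add: field_simps)
    finally show ?thesis .
  qed
  ultimately have "z \<in> ball p r - cball q r"
    using s by (simp add: dist_commute)
  then show ?thesis by blast
qed

lemma ball_diff_cball_subset_sum_sphere:
  fixes A C :: "'a::real_normed_vector set"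
  assumes "connected C" "C \<subseteq> A" "p \<in> C" "q \<in> C"
  shows "ball p r - cball q r \<subseteq> {a + s | a s. a \<in> A \<and> s \<in> sphere 0 r}"
proof
  fix w
  assume "w \<in> ball p r - cball q r"
  then have "dist w p \<le> r" "r \<le> dist w q"
    by (auto simp: dist_commute)
  then obtain c where "c \<in> C" "dist w c = r"
    using connected_dist_intermediate_value[OF assms(1,3,4)] by blast
  then have "c \<in> A" "w - c \<in> sphere 0 r" "w = c + (w - c)"
    using assms(2) by (auto simp: dist_norm norm_minus_commute)
  then show "w \<in> {a + s | a s. a \<in> A \<and> s \<in> sphere 0 r}"
    by blast
qed

lemma interior_sum_sphere_nonempty:
  fixes A C :: "'a::real_normed_vector set"
  assumes "connected C" "C \<subseteq> A" "p \<in> C" "q \<in> C" "p \<noteq> q" "r > 0"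
  shows "interior {a + s | a s. a \<in> A \<and> s \<in> sphere 0 r} \<noteq> {}"
proof -
  have "ball p r - cball q r \<subseteq> interior {a + s | a s. a \<in> A \<and> s \<in> sphere 0 r}"
    using assms(1-4) by (intro interior_maximal ball_diff_cball_subset_sum_sphere) auto
  then show ?thesis
    using ball_diff_cball_nonempty[OF assms(5,6)] by blast
qed

theorem mainTheorem8:
  fixes A :: "(real^2) set"
  assumes "\<exists>x\<in>A. \<not> (\<exists>y. connected_component_set A x = {y})"
  shows "interior {a + s | a s. a \<in> A \<and> s \<in> sphere (0::real^2) 1} \<noteq> {}"
proof -
  obtain p where "p \<in> A" and nonsingleton: "\<not> (\<exists>y. connected_component_set A p = {y})"
    using assms by blast
  then have "p \<in> connected_component_set A p"
    by (simp add: connected_component_refl)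
  then obtain q where "q \<in> connected_component_set A p" "q \<noteq> p"
    using nonsingleton by blast
  then show ?thesis
    using interior_sum_sphere_nonempty[of "connected_component_set A p" A p q 1]
      \<open>p \<in> connected_component_set A p\<close>
    by (simp add: connected_connected_component connected_component_subset)
qed

end
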